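(* Let $T$ be a string of length $n$ and $1\le i\le j<n$. For each $[s,t]\in\mathsf{MUS}(T[i..j+1])$ with $t\ne j+1$, if $[s,t]\notin\mathsf{MUS}(T[i..j])$ then $\#\mathit{occ}_{T[i..j+1]}(\mathit{sqs}_{i,j+1})=2$ and $\mathit{sqs}_{i,j+1}$ is a proper substring of $T[s..t]$.
   Context: $T[a..b]$ denotes the substring of $T$ from position $a$ to $b$. For strings $S,w$, $\#\mathit{occ}_S(w)$ is the number of positions at which $w$ occurs in $S$, with $\#\mathit{occ}_S(\varepsilon)=|S|+1$. A substring $w$ of $S$ is unique in $S$ if $\#\mathit{occ}_S(w)=1$ and repeating if $\#\mathit{occ}_S(w)\ge 2$. For $1\le i\le j\le n$, $\mathsf{MUS}(T[i..j])$ is the set of intervals $[s,t]$ (positions in $T$) with $i\le s\le t\le j$ such that $T[s..t]$ is unique in $T[i..j]$ and every proper substring of $T[s..t]$ (including the empty string) is repeating in $T[i..j]$. $\mathit{sqs}_{i,j}$ is the shortest suffix of $T[i..j]$ that occurs at most twice in $T[i..j]$. *)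

theory Defs
  imports Main "HOL-Library.Sublist"
begin

text \<open>Strings are lists; positions are 1-based. substr T a b is T[a..b].\<close>
definition substr :: "'a list \<Rightarrow> nat \<Rightarrow> nat \<Rightarrow> 'a list" where
  "substr T a b = take (Suc b - a) (drop (a - 1) T)"

text \<open>Number of (0-based) starting positions at which w occurs in S;
  for the empty word this is length S + 1.\<close>
definition occ :: "'a list \<Rightarrow> 'a list \<Rightarrow> nat" where
  "occ S w = card {p. p + length w \<le> length S \<and> take (length w) (drop p S) = w}"

definition unique_in :: "'a list \<Rightarrow> 'a list \<Rightarrow> bool" where
  "unique_in S w \<longleftrightarrow> occ S w = 1"

definition repeating_in :: "'a list \<Rightarrow> 'a list \<Rightarrow> bool" where
  "repeating_in S w \<longleftrightarrow> occ S w \<ge> 2"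

definition MUS :: "'a list \<Rightarrow> nat \<Rightarrow> nat \<Rightarrow> (nat \<times> nat) set" where
  "MUS T i j = {(s, t). i \<le> s \<and> s \<le> t \<and> t \<le> j
      \<and> unique_in (substr T i j) (substr T s t)
      \<and> (\<forall>w. strict_sublist w (substr T s t) \<longrightarrow> repeating_in (substr T i j) w)}"

definition sqs_str :: "'a list \<Rightarrow> 'a list" where
  "sqs_str S = drop (length S - (LEAST k. k \<le> length S \<and> occ S (drop (length S - k) S) \<le> 2)) S"

definition sqs :: "'a list \<Rightarrow> nat \<Rightarrow> nat \<Rightarrow> 'a list" where
  "sqs T i j = sqs_str (substr T i j)"

end

theory Submission
  imports Defs
begin

(* Since t \<le> j, the interval [s,t] lies inside T[i..j], and T[s..t] is still unique there:
   appending a letter never destroys occurrences. So [s,t] can only fail to be a MUS of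
   T[i..j] through minimality: some proper substring w of T[s..t] occurs at most once in
   T[i..j] but at least twice in T[i..j+1]. Appending one letter adds at most one occurrence,
   and only as a suffix; hence w is a suffix of T[i..j+1] occurring exactly twice. The
   shortest suffix occurring at most twice is then a suffix of w, and it occurs at least as
   often as w, i.e. exactly twice. *)

definition occurrences :: "'a list \<Rightarrow> 'a list \<Rightarrow> nat set" where
  "occurrences S w = {p. p + length w \<le> length S \<and> take (length w) (drop p S) = w}"

lemma occ_eq_card_occurrences: "occ S w = card (occurrences S w)"
  by (simp add: occ_def occurrences_def)

lemma finite_occurrences: "finite (occurrences S w)"
  by (rule finite_subset[of _ "{..length S}"]) (auto simp: occurrences_def)

lemma occ_mono_prefix:
  assumes "prefix S S'"
  shows "occ S w \<le> occ S' w"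
proof -
  have "occurrences S w \<subseteq> occurrences S' w"
    using assms by (auto simp: occurrences_def prefix_def)
  then show ?thesis
    unfolding occ_eq_card_occurrences by (rule card_mono[OF finite_occurrences])
qed

lemma occurrences_snoc:
  "occurrences (S @ [c]) w \<subseteq> insert (Suc (length S) - length w) (occurrences S w)"
  by (auto simp: occurrences_def)

lemma occ_snoc_le_Suc: "occ (S @ [c]) w \<le> Suc (occ S w)"
proof -
  have "occ (S @ [c]) w \<le> card (insert (Suc (length S) - length w) (occurrences S w))"
    unfolding occ_eq_card_occurrences
    by (rule card_mono) (simp_all add: finite_occurrences occurrences_snoc)
  also have "\<dots> \<le> Suc (occ S w)"
    by (simp add: card_insert_if finite_occurrences occ_eq_card_occurrences)
  finally show ?thesis .
qed

lemma suffix_if_occ_snoc_gt: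
  assumes "occ S w < occ (S @ [c]) w"
  shows "suffix w (S @ [c])"
proof -
  have "\<not> occurrences (S @ [c]) w \<subseteq> occurrences S w"
    using assms card_mono[OF finite_occurrences, of "occurrences (S @ [c]) w" S w]
    unfolding occ_eq_card_occurrences by linarith
  then obtain p where new: "p \<in> occurrences (S @ [c]) w" "p \<notin> occurrences S w"
    by blast
  then have "\<not> p + length w \<le> length S"
    by (auto simp: occurrences_def)
  with new(1) have "p + length w = Suc (length S)"
    by (simp add: occurrences_def)
  with new(1) have "drop p (S @ [c]) = w"
    by (simp add: occurrences_def)
  then show ?thesis
    by (metis suffix_drop)
qed

lemma occ_antimono_sublist:
  assumes "sublist v w"
  shows "occ S w \<le> occ S v"
proof -
  obtain a b where w: "w = a @ v @ b"
    using assms by (auto simp: sublist_def)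
  have "(\<lambda>p. p + length a) ` occurrences S w \<subseteq> occurrences S v"
  proof
    fix q assume "q \<in> (\<lambda>p. p + length a) ` occurrences S w"
    then obtain p where q: "q = p + length a" and p: "p \<in> occurrences S w"
      by auto
    have "take (length v + length b) (drop q S) = drop (length a) (take (length w) (drop p S))"
      by (simp add: q w drop_take add.commute)
    also have "\<dots> = v @ b"
      using p by (simp add: occurrences_def w)
    finally have "take (length v) (take (length v + length b) (drop q S)) = v"
      by simp
    then have "take (length v) (drop q S) = v"
      by (simp add: min_def)
    then show "q \<in> occurrences S v"
      using p q w by (simp add: occurrences_def)
  qed
  moreover have "inj_on (\<lambda>p. p + length a) (occurrences S w)"
    by (simp add: inj_on_def)
  ultimately show ?thesis
    unfolding occ_eq_card_occurrences by (metis card_inj_on_le finite_occurrences)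
qed

lemma occ_pos_if_sublist:
  assumes "sublist w S"
  shows "0 < occ S w"
proof -
  obtain a b where "S = a @ w @ b"
    using assms by (auto simp: sublist_def)
  then have "length a \<in> occurrences S w"
    by (simp add: occurrences_def)
  then show ?thesis
    unfolding occ_eq_card_occurrences using finite_occurrences card_gt_0_iff by blast
qed

lemma sqs_str_suffix_of_rare_suffix:
  assumes "suffix v S" "occ S v \<le> 2"
  shows "suffix (sqs_str S) v" "occ S (sqs_str S) \<le> 2"
proof -
  define P where "P k \<longleftrightarrow> k \<le> length S \<and> occ S (drop (length S - k) S) \<le> 2" for k
  define K where "K = (LEAST k. P k)"
  have v: "drop (length S - length v) S = v" "length v \<le> length S"
    using assms(1) by (auto simp: suffix_def)
  then have "P (length v)"
    using assms(2) by (simp add: P_def)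
  then have "P K" "K \<le> length v"
    unfolding K_def by (auto intro: LeastI Least_le)
  moreover have "sqs_str S = drop (length S - K) S"
    by (simp add: sqs_str_def P_def K_def)
  ultimately show "occ S (sqs_str S) \<le> 2" "suffix (sqs_str S) v"
    using assms(1) by (auto simp: P_def intro: suffix_length_suffix suffix_drop)
qed

definition minimal_unique :: "'a list \<Rightarrow> 'a list \<Rightarrow> bool" where
  "minimal_unique S u \<longleftrightarrow> unique_in S u \<and> (\<forall>w. strict_sublist w u \<longrightarrow> repeating_in S w)"

lemma MUS_iff_minimal_unique:
  "(s, t) \<in> MUS T i j \<longleftrightarrow>
     i \<le> s \<and> s \<le> t \<and> t \<le> j \<and> minimal_unique (substr T i j) (substr T s t)"
  by (simp add: MUS_def minimal_unique_def)

lemma minimal_unique_snoc_lost: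
  assumes "sublist u S" "minimal_unique (S @ [c]) u" "\<not> minimal_unique S u"
  obtains w where "strict_sublist w u" "suffix w (S @ [c])" "occ (S @ [c]) w = 2"
proof -
  have "occ S u \<le> occ (S @ [c]) u"
    by (rule occ_mono_prefix) simp
  with assms(1,2) have "unique_in S u"
    using occ_pos_if_sublist[of u S] by (simp add: minimal_unique_def unique_in_def)
  with assms(3) obtain w where w: "strict_sublist w u" "occ S w \<le> 1"
    by (auto simp: minimal_unique_def repeating_in_def)
  moreover have "2 \<le> occ (S @ [c]) w"
    using assms(2) w(1) by (simp add: minimal_unique_def repeating_in_def)
  moreover have "occ (S @ [c]) w \<le> Suc (occ S w)"
    by (rule occ_snoc_le_Suc)
  ultimately show ?thesis
    using that suffix_if_occ_snoc_gt[of S w c] by simp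
qed

lemma substr_Suc:
  assumes "1 \<le> i" "i \<le> Suc j" "j < length T"
  shows "substr T i (Suc j) = substr T i j @ [T ! j]"
  using assms by (simp add: substr_def Suc_diff_le take_Suc_conv_app_nth)

lemma sublist_substr:
  assumes "1 \<le> i" "i \<le> s" "t \<le> j"
  shows "sublist (substr T s t) (substr T i j)"
proof (cases "s \<le> t")
  case True
  have "substr T s t = take (Suc t - s) (drop (s - i) (substr T i j))"
    using assms True by (simp add: substr_def drop_take min_def)
  then show ?thesis
    by (metis sublist_order.order.trans sublist_drop sublist_take)
qed (simp add: substr_def)

theorem lemma5:
  fixes T :: "'a list" and i j s t :: nat
  assumes "1 \<le> i" "i \<le> j" "j < length T"
    and "(s, t) \<in> MUS T i (Suc j)" "t \<noteq> Suc j"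
    and "(s, t) \<notin> MUS T i j"
  shows "occ (substr T i (Suc j)) (sqs T i (Suc j)) = 2
         \<and> strict_sublist (sqs T i (Suc j)) (substr T s t)"
proof -
  define S' where "S' = substr T i (Suc j)"
  have S': "S' = substr T i j @ [T ! j]"
    using assms(1-3) by (simp add: S'_def substr_Suc)
  have bounds: "i \<le> s" "s \<le> t" "t \<le> j"
    using assms(4,5) by (auto simp: MUS_iff_minimal_unique)
  have "sublist (substr T s t) (substr T i j)"
    using assms(1) bounds by (simp add: sublist_substr)
  moreover have "minimal_unique S' (substr T s t)"
    and "\<not> minimal_unique (substr T i j) (substr T s t)"
    using assms(4,6) bounds by (simp_all add: MUS_iff_minimal_unique S'_def)
  ultimately obtain w where w: "strict_sublist w (substr T s t)" "suffix w S'" "occ S' w = 2"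
    unfolding S' by (rule minimal_unique_snoc_lost)
  then have "suffix (sqs_str S') w" "occ S' (sqs_str S') \<le> 2"
    using sqs_str_suffix_of_rare_suffix[of w S'] by simp_all
  moreover have "occ S' w \<le> occ S' (sqs_str S')"
    using \<open>suffix (sqs_str S') w\<close> by (simp add: occ_antimono_sublist)
  ultimately show ?thesis
    using w by (auto simp: sqs_def S'_def intro: sublist_order.le_less_trans)
qed

end
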